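(* For a stationary policy $\pi$ and $h\ge0$ let $$\overline V^\pi_{0:h}(s):=\min_{\{\hat P_t\}_{t=0}^h}\mathbb E\Big[\sum_{t=0}^h\gamma^t\big(r(s_t,a_t)+\gamma D(\hat P_{t;s_t,a_t},P_{s_t,a_t})\big)\,\Big|\,s_0=s\Big],$$ with $a_t\sim\pi(\cdot|s_t)$, $s_{t+1}\sim\hat P_{t;s_t,a_t}$, and set $\overline V^\pi_{0:-1}:=0$. Then for all $h\ge-1$, $\overline V^\pi_{0:h+1}=\mathcal T^\pi\overline V^\pi_{0:h}$, where $[\mathcal T^\pi V](s)=\sum_a\pi(a|s)(r(s,a)-\gamma\sigma(P_{s,a},V))$. Moreover, for every initial state $s$ the minimum is attained by the same kernels $\hat P^\pi_{t|h;s,a}\in\arg\min_{\hat\mu\in\Delta(\mathcal S)}\big(D(\hat\mu,P_{s,a})+\mathbb E_{s'\sim\hat\mu}\overline V^\pi_{0:h-t-1}(s')\big)$, $t=0,\dots,h$.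
   Context: $\mathcal S$, $\mathcal A$ finite; $\Delta(\mathcal X)$ is the probability simplex over $\mathcal X$. $P=\{P_{s,a}\}$, $P_{s,a}\in\Delta(\mathcal S)$, is the nominal kernel, $r:\mathcal S\times\mathcal A\to[0,1]$, $\gamma\in[0,1)$. A stationary policy is a map $\pi:\mathcal S\to\Delta(\mathcal A)$. A function $\sigma:\mathbb R^{\mathcal S}\to\mathbb R$ is a convex risk measure if (i) $V'\le V$ pointwise implies $\sigma(V)\le\sigma(V')$; (ii) $\sigma(V+m)=\sigma(V)-m$ for constants $m$; (iii) $\sigma$ is convex. For each $(s,a)$ a convex risk measure $\sigma(P_{s,a},\cdot)$ is given and $D(\hat\mu,P_{s,a}):=\sup_{V}\big(-\sigma(P_{s,a},V)-\mathbb E_{s'\sim\hat\mu}V(s')\big)$; it is known that then $\sigma(P_{s,a},V)=\sup_{\hat\mu\in\Delta(\mathcal S)}(-\mathbb E_{\hat\mu}V-D(\hat\mu,P_{s,a}))$ and $D(\cdot,P_{s,a})$ is convex and lower semicontinuous. The minimum is over sequences of time-dependent kernels $\hat P_{t;s,a}\in\Delta(\mathcal S)$. *)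

theory Defs
  imports Complex_Main "HOL-Library.Extended_Real"
begin

definition simplex :: "('x::finite \<Rightarrow> real) set" where
  "simplex = {\<mu>. (\<forall>x. 0 \<le> \<mu> x) \<and> sum \<mu> UNIV = 1}"

definition expect :: "('x::finite \<Rightarrow> real) \<Rightarrow> ('x \<Rightarrow> real) \<Rightarrow> real" where
  "expect \<mu> V = (\<Sum>x\<in>UNIV. \<mu> x * V x)"

definition convex_risk_measure :: "(('x::finite \<Rightarrow> real) \<Rightarrow> real) \<Rightarrow> bool" where
  "convex_risk_measure \<sigma> \<longleftrightarrow>
     (\<forall>V V'. (\<forall>x. V' x \<le> V x) \<longrightarrow> \<sigma> V \<le> \<sigma> V') \<and>
     (\<forall>V m. \<sigma> (\<lambda>x. V x + m) = \<sigma> V - m) \<and>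
     (\<forall>V W t. 0 \<le> t \<and> t \<le> 1 \<longrightarrow>
        \<sigma> (\<lambda>x. t * V x + (1 - t) * W x) \<le> t * \<sigma> V + (1 - t) * \<sigma> W)"

definition penalty :: "(('x::finite \<Rightarrow> real) \<Rightarrow> real) \<Rightarrow> ('x \<Rightarrow> real) \<Rightarrow> ereal" where
  "penalty \<sigma> \<mu> = (SUP V. ereal (- \<sigma> V - expect \<mu> V))"

text \<open>Trajectories of length n are lists [(s_0,a_0),...,(s_{n-1},a_{n-1})].
  K t s a is the (time-dependent) kernel hat P_{t;s,a}.\<close>
definition traj_prob ::
  "('s::finite \<Rightarrow> 'a::finite \<Rightarrow> real) \<Rightarrow> (nat \<Rightarrow> 's \<Rightarrow> 'a \<Rightarrow> 's \<Rightarrow> real) \<Rightarrow> 's \<Rightarrow> ('s \<times> 'a) list \<Rightarrow> real" where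
  "traj_prob \<pi> K s0 xs =
     (if xs \<noteq> [] \<and> fst (hd xs) = s0 then
        (\<Prod>t<length xs. \<pi> (fst (xs ! t)) (snd (xs ! t))) *
        (\<Prod>t<length xs - 1. K t (fst (xs ! t)) (snd (xs ! t)) (fst (xs ! Suc t)))
      else 0)"

definition traj_cost ::
  "(('s::finite \<Rightarrow> real) \<Rightarrow> ('s \<Rightarrow> real) \<Rightarrow> real) \<Rightarrow> ('s \<Rightarrow> 'a::finite \<Rightarrow> 's \<Rightarrow> real) \<Rightarrow>
   ('s \<Rightarrow> 'a \<Rightarrow> real) \<Rightarrow> real \<Rightarrow> (nat \<Rightarrow> 's \<Rightarrow> 'a \<Rightarrow> 's \<Rightarrow> real) \<Rightarrow> ('s \<times> 'a) list \<Rightarrow> ereal" where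
  "traj_cost sig P r \<gamma> K xs =
     (\<Sum>t<length xs. ereal (\<gamma> ^ t) *
        (ereal (r (fst (xs ! t)) (snd (xs ! t))) +
         ereal \<gamma> * penalty (sig (P (fst (xs ! t)) (snd (xs ! t))))
                           (K t (fst (xs ! t)) (snd (xs ! t)))))"

text \<open>Expected cost E[sum_{t=0}^{n-1} gamma^t (r + gamma D(hat P_t, P)) | s_0 = s0]
  (horizon h = n - 1).\<close>
definition exp_cost ::
  "(('s::finite \<Rightarrow> real) \<Rightarrow> ('s \<Rightarrow> real) \<Rightarrow> real) \<Rightarrow> ('s \<Rightarrow> 'a::finite \<Rightarrow> 's \<Rightarrow> real) \<Rightarrow>
   ('s \<Rightarrow> 'a \<Rightarrow> real) \<Rightarrow> real \<Rightarrow> ('s \<Rightarrow> 'a \<Rightarrow> real) \<Rightarrow> (nat \<Rightarrow> 's \<Rightarrow> 'a \<Rightarrow> 's \<Rightarrow> real) \<Rightarrow>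
   nat \<Rightarrow> 's \<Rightarrow> ereal" where
  "exp_cost sig P r \<gamma> \<pi> K n s0 =
     (\<Sum>xs\<in>{xs. length xs = n}. ereal (traj_prob \<pi> K s0 xs) * traj_cost sig P r \<gamma> K xs)"

definition Vbar ::
  "(('s::finite \<Rightarrow> real) \<Rightarrow> ('s \<Rightarrow> real) \<Rightarrow> real) \<Rightarrow> ('s \<Rightarrow> 'a::finite \<Rightarrow> 's \<Rightarrow> real) \<Rightarrow>
   ('s \<Rightarrow> 'a \<Rightarrow> real) \<Rightarrow> real \<Rightarrow> ('s \<Rightarrow> 'a \<Rightarrow> real) \<Rightarrow> int \<Rightarrow> 's \<Rightarrow> ereal" where
  "Vbar sig P r \<gamma> \<pi> h s =
     (if h < 0 then 0
      else (INF K\<in>{K. \<forall>t s a. K t s a \<in> simplex}. exp_cost sig P r \<gamma> \<pi> K (nat (h + 1)) s))"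

definition Tpi ::
  "(('s::finite \<Rightarrow> real) \<Rightarrow> ('s \<Rightarrow> real) \<Rightarrow> real) \<Rightarrow> ('s \<Rightarrow> 'a::finite \<Rightarrow> 's \<Rightarrow> real) \<Rightarrow>
   ('s \<Rightarrow> 'a \<Rightarrow> real) \<Rightarrow> real \<Rightarrow> ('s \<Rightarrow> 'a \<Rightarrow> real) \<Rightarrow> ('s \<Rightarrow> real) \<Rightarrow> 's \<Rightarrow> real" where
  "Tpi sig P r \<gamma> \<pi> V s = (\<Sum>a\<in>UNIV. \<pi> s a * (r s a - \<gamma> * sig (P s a) V))"

definition argmin_set ::
  "(('s::finite \<Rightarrow> real) \<Rightarrow> ('s \<Rightarrow> real) \<Rightarrow> real) \<Rightarrow> ('s \<Rightarrow> 'a::finite \<Rightarrow> 's \<Rightarrow> real) \<Rightarrow>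
   ('s \<Rightarrow> ereal) \<Rightarrow> 's \<Rightarrow> 'a \<Rightarrow> ('s \<Rightarrow> real) set" where
  "argmin_set sig P V s a =
     {\<mu> \<in> simplex. \<forall>\<nu> \<in> simplex.
        penalty (sig (P s a)) \<mu> + (\<Sum>s'\<in>UNIV. ereal (\<mu> s') * V s')
        \<le> penalty (sig (P s a)) \<nu> + (\<Sum>s'\<in>UNIV. ereal (\<nu> s') * V s')}"

end

theory Submission
  imports Defs "HOL-Analysis.Cartesian_Euclidean_Space"
begin

text \<open>Conditioning on the first state-action pair splits the expected cost of a kernel sequence
  over n + 1 steps into the immediate reward, the penalty of the first kernel, and the average, under
  that kernel, of the cost of the shifted sequence over n steps. Bounding the tail below by the
  n-step optimum V and using the dual representation
  \<sigma>(P, V) = sup over \<mu> of (- E_\<mu> V - D(\<mu>, P)) gives the lower bound T^\<pi> V.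
  The supremum is attained because the simplex is compact and D, a supremum of affine functions,
  is lower semicontinuous; so choosing every kernel in the corresponding argmin set (greedily,
  backwards in the horizon) achieves the bound, and induction on the horizon gives both claims.\<close>

section \<open>Trajectories\<close>

lemma simplex_nonneg: "\<mu> \<in> simplex \<Longrightarrow> 0 \<le> \<mu> x"
  by (simp add: simplex_def)

lemma simplex_sum: "\<mu> \<in> simplex \<Longrightarrow> sum \<mu> UNIV = 1"
  by (simp add: simplex_def)

lemma sum_distrib_left_ereal_nn:
  "0 \<le> c \<Longrightarrow> ereal c * sum f A = (\<Sum>x\<in>A. ereal c * f x)"
  using sum_distrib_right_ereal[of c f A] by (simp add: mult.commute)

lemma sum_distrib_right_ereal_nn:
  "(\<And>x. x \<in> A \<Longrightarrow> 0 \<le> w x) \<Longrightarrow> ereal (sum w A) * y = (\<Sum>x\<in>A. ereal (w x) * y)"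
  by (simp add: sum_ereal_left_distrib flip: sum_ereal)

lemma ereal_times_assoc: "ereal (a * b) * x = ereal a * (ereal b * x)"
  by (simp add: mult.assoc[symmetric])

lemma sum_lists_length_Suc:
  fixes F :: "'x::finite list \<Rightarrow> 'b::comm_monoid_add"
  shows "(\<Sum>xs\<in>{xs. length xs = Suc n}. F xs) = (\<Sum>x\<in>UNIV. \<Sum>ys\<in>{ys. length ys = n}. F (x # ys))"
proof -
  have inj: "inj_on (case_prod (#)) (UNIV \<times> {ys :: 'x list. length ys = n})"
    by (auto simp: inj_on_def)
  have lists: "{xs. length xs = Suc n} = case_prod (#) ` (UNIV \<times> {ys. length ys = n})"
    by (auto simp: length_Suc_conv)
  have "(\<Sum>xs\<in>{xs. length xs = Suc n}. F xs) = sum (F \<circ> case_prod (#)) (UNIV \<times> {ys. length ys = n})"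
    unfolding lists by (rule sum.reindex[OF inj])
  then show ?thesis
    by (simp add: sum.cartesian_product comp_def case_prod_beta)
qed

lemma sum_lists_length_Suc_head:
  fixes F :: "('s::finite \<times> 'a::finite) list \<Rightarrow> 'b::comm_monoid_add"
  assumes "\<And>s' a ys. s' \<noteq> s \<Longrightarrow> F ((s', a) # ys) = 0"
  shows "(\<Sum>xs\<in>{xs. length xs = Suc n}. F xs) = (\<Sum>a\<in>UNIV. \<Sum>ys\<in>{ys. length ys = n}. F ((s, a) # ys))"
proof -
  let ?G = "\<lambda>x. \<Sum>ys\<in>{ys. length ys = n}. F (x # ys)"
  have "sum ?G UNIV = sum ?G (Pair s ` UNIV)"
    by (rule sum.mono_neutral_right) (auto simp: assms image_iff)
  then show ?thesis
    by (simp add: sum_lists_length_Suc sum.reindex inj_on_def)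
qed

definition shift :: "(nat \<Rightarrow> 'b) \<Rightarrow> nat \<Rightarrow> 'b" where
  "shift K t = K (Suc t)"

lemma shift_apply [simp]: "shift K t = K (Suc t)"
  by (simp add: shift_def)

lemma traj_prob_Cons_other: "s \<noteq> s0 \<Longrightarrow> traj_prob \<pi> K s0 ((s, a) # ys) = 0"
  by (simp add: traj_prob_def)

lemma traj_prob_singleton: "traj_prob \<pi> K s [(s, a)] = \<pi> s a"
  by (simp add: traj_prob_def)

lemma traj_prob_Cons_Cons:
  "traj_prob \<pi> K s ((s, a) # y # ys) = \<pi> s a * K 0 s a (fst y) * traj_prob \<pi> (shift K) (fst y) (y # ys)"
  by (simp add: traj_prob_def prod.lessThan_Suc_shift del: prod.lessThan_Suc)

lemma traj_prob_Cons_sum: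
  assumes "ys \<noteq> []"
  shows "traj_prob \<pi> K s ((s, a) # ys) = \<pi> s a * (\<Sum>s'\<in>UNIV. K 0 s a s' * traj_prob \<pi> (shift K) s' ys)"
proof -
  obtain y zs where ys: "ys = y # zs" using assms by (cases ys) auto
  have "(\<Sum>s'\<in>UNIV. K 0 s a s' * traj_prob \<pi> (shift K) s' ys) = K 0 s a (fst y) * traj_prob \<pi> (shift K) (fst y) ys"
    by (subst sum.remove[of UNIV "fst y"]) (auto simp: ys traj_prob_def intro!: sum.neutral)
  then show ?thesis by (simp add: ys traj_prob_Cons_Cons)
qed

definition valid_kernels :: "nat \<Rightarrow> (nat \<Rightarrow> 's::finite \<Rightarrow> 'a \<Rightarrow> 's \<Rightarrow> real) \<Rightarrow> bool" where
  "valid_kernels n K \<longleftrightarrow> (\<forall>t<n. \<forall>s a. K t s a \<in> simplex)"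

lemma valid_kernels_shift: "valid_kernels (Suc n) K \<Longrightarrow> valid_kernels n (shift K)"
  by (simp add: valid_kernels_def)

lemma valid_kernels_mono: "valid_kernels n K \<Longrightarrow> m \<le> n \<Longrightarrow> valid_kernels m K"
  by (simp add: valid_kernels_def)

lemma valid_kernels_nonneg: "valid_kernels n K \<Longrightarrow> t < n \<Longrightarrow> 0 \<le> K t s a s'"
  by (simp add: valid_kernels_def simplex_nonneg)

lemma traj_cost_Nil: "traj_cost sig P r \<gamma> K [] = 0"
  by (simp add: traj_cost_def)

lemma traj_cost_Cons:
  assumes "0 \<le> \<gamma>"
  shows "traj_cost sig P r \<gamma> K ((s, a) # ys) =
    ereal (r s a) + ereal \<gamma> * penalty (sig (P s a)) (K 0 s a) + ereal \<gamma> * traj_cost sig P r \<gamma> (shift K) ys"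
proof -
  have "traj_cost sig P r \<gamma> K ((s, a) # ys) =
     ereal (r s a) + ereal \<gamma> * penalty (sig (P s a)) (K 0 s a) +
     (\<Sum>t<length ys. ereal (\<gamma> ^ Suc t) *
        (ereal (r (fst (ys ! t)) (snd (ys ! t))) +
         ereal \<gamma> * penalty (sig (P (fst (ys ! t)) (snd (ys ! t)))) (K (Suc t) (fst (ys ! t)) (snd (ys ! t)))))"
    unfolding traj_cost_def
    by (simp add: sum.lessThan_Suc_shift one_ereal_def[symmetric] del: sum.lessThan_Suc)
  then show ?thesis
    unfolding traj_cost_def sum_distrib_left_ereal_nn[OF assms]
    by (simp add: ereal_times_assoc)
qed

locale stochastic_policy =
  fixes \<pi> :: "'s::finite \<Rightarrow> 'a::finite \<Rightarrow> real"
  assumes policy_simplex: "\<pi> s \<in> simplex"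
begin

lemma policy_nonneg: "0 \<le> \<pi> s a"
  using policy_simplex by (rule simplex_nonneg)

lemma traj_prob_nonneg:
  assumes "valid_kernels n K" "length xs \<le> Suc n"
  shows "0 \<le> traj_prob \<pi> K s xs"
  using assms unfolding traj_prob_def
  by (auto intro!: mult_nonneg_nonneg prod_nonneg policy_nonneg valid_kernels_nonneg[OF assms(1)])

lemma sum_traj_prob_Cons:
  "valid_kernels n K \<Longrightarrow> (\<Sum>ys\<in>{ys. length ys = n}. traj_prob \<pi> K s ((s, a) # ys)) = \<pi> s a"
proof (induction n arbitrary: K s a)
  case 0
  then show ?case by (simp add: traj_prob_singleton)
next
  case (Suc n)
  have mass: "(\<Sum>ys\<in>{ys. length ys = Suc n}. traj_prob \<pi> (shift K) s' ys) = 1" for s'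
  proof -
    have "(\<Sum>ys\<in>{ys. length ys = Suc n}. traj_prob \<pi> (shift K) s' ys) = (\<Sum>a'\<in>UNIV. \<pi> s' a')"
      by (subst sum_lists_length_Suc_head[where s = s'])
         (simp_all add: traj_prob_Cons_other Suc.IH[OF valid_kernels_shift[OF Suc.prems]])
    then show ?thesis by (simp add: simplex_sum policy_simplex)
  qed
  have "(\<Sum>ys\<in>{ys. length ys = Suc n}. traj_prob \<pi> K s ((s, a) # ys))
      = (\<Sum>ys\<in>{ys. length ys = Suc n}. \<pi> s a * (\<Sum>s'\<in>UNIV. K 0 s a s' * traj_prob \<pi> (shift K) s' ys))"
    by (intro sum.cong refl traj_prob_Cons_sum) auto
  also have "\<dots> = \<pi> s a * (\<Sum>s'\<in>UNIV. K 0 s a s' * (\<Sum>ys\<in>{ys. length ys = Suc n}. traj_prob \<pi> (shift K) s' ys))"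
    by (simp add: sum_distrib_left sum.swap[where A = "{ys. length ys = Suc n}"])
  also have "\<dots> = \<pi> s a"
    using Suc.prems by (simp add: mass valid_kernels_def simplex_sum)
  finally show ?case .
qed

lemma sum_traj_prob_Cons_mult:
  fixes G :: "('s \<times> 'a) list \<Rightarrow> ereal"
  assumes K: "valid_kernels n K" and G: "G [] = 0"
  shows "(\<Sum>ys\<in>{ys. length ys = n}. ereal (traj_prob \<pi> K s ((s, a) # ys)) * G ys)
    = ereal (\<pi> s a) * (\<Sum>s'\<in>UNIV. ereal (K 0 s a s') *
        (\<Sum>ys\<in>{ys. length ys = n}. ereal (traj_prob \<pi> (shift K) s' ys) * G ys))"
proof (cases n)
  case 0
  then show ?thesis by (simp add: G traj_prob_def)
next
  case (Suc m)
  let ?Ys = "{ys. length ys = n}"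
  have K0: "0 \<le> K 0 s a s'" for s'
    using K Suc by (simp add: valid_kernels_nonneg)
  have K': "0 \<le> traj_prob \<pi> (shift K) s' ys" if "ys \<in> ?Ys" for s' ys
    using that K Suc by (intro traj_prob_nonneg[OF valid_kernels_shift[of m K]]) simp_all
  have "ereal (traj_prob \<pi> K s ((s, a) # ys)) * G ys
      = (\<Sum>s'\<in>UNIV. ereal (\<pi> s a * K 0 s a s') * (ereal (traj_prob \<pi> (shift K) s' ys) * G ys))"
    if "ys \<in> ?Ys" for ys
  proof -
    have "ys \<noteq> []" using that Suc by auto
    then have "ereal (traj_prob \<pi> K s ((s, a) # ys)) * G ys
        = ereal (\<Sum>s'\<in>UNIV. \<pi> s a * K 0 s a s' * traj_prob \<pi> (shift K) s' ys) * G ys"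
      by (simp add: traj_prob_Cons_sum sum_distrib_left mult.assoc)
    also have "\<dots> = (\<Sum>s'\<in>UNIV. ereal (\<pi> s a * K 0 s a s' * traj_prob \<pi> (shift K) s' ys) * G ys)"
      using that by (intro sum_distrib_right_ereal_nn) (simp add: policy_nonneg K0 K')
    finally show ?thesis by (simp only: ereal_times_assoc)
  qed
  then have "(\<Sum>ys\<in>?Ys. ereal (traj_prob \<pi> K s ((s, a) # ys)) * G ys)
      = (\<Sum>s'\<in>UNIV. ereal (\<pi> s a * K 0 s a s') * (\<Sum>ys\<in>?Ys. ereal (traj_prob \<pi> (shift K) s' ys) * G ys))"
    by (simp add: sum.swap[where A = ?Ys] sum_distrib_left_ereal_nn policy_nonneg K0)
  also have "\<dots> = ereal (\<pi> s a) * (\<Sum>s'\<in>UNIV. ereal (K 0 s a s') *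
        (\<Sum>ys\<in>?Ys. ereal (traj_prob \<pi> (shift K) s' ys) * G ys))"
    by (simp add: sum_distrib_left_ereal_nn policy_nonneg ereal_times_assoc)
  finally show ?thesis .
qed

lemma exp_cost_0: "exp_cost sig P r \<gamma> \<pi> K 0 s = 0"
  by (simp add: exp_cost_def traj_prob_def)

lemma exp_cost_Suc:
  assumes \<gamma>: "0 \<le> \<gamma>" and K: "valid_kernels (Suc n) K"
  shows "exp_cost sig P r \<gamma> \<pi> K (Suc n) s =
    (\<Sum>a\<in>UNIV. ereal (\<pi> s a) * (ereal (r s a) + ereal \<gamma> *
      (penalty (sig (P s a)) (K 0 s a) + (\<Sum>s'\<in>UNIV. ereal (K 0 s a s') * exp_cost sig P r \<gamma> \<pi> (shift K) n s'))))"
proof -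
  let ?Ys = "{ys. length ys = n}"
  let ?p = "\<lambda>a ys. traj_prob \<pi> K s ((s, a) # ys)"
  let ?c = "\<lambda>a. ereal (r s a) + ereal \<gamma> * penalty (sig (P s a)) (K 0 s a)"
  let ?C = "traj_cost sig P r \<gamma> (shift K)"
  let ?EC = "\<lambda>s'. exp_cost sig P r \<gamma> \<pi> (shift K) n s'"
  have K_n: "valid_kernels n K"
    using K by (rule valid_kernels_mono) simp
  have p: "0 \<le> ?p a ys" if "ys \<in> ?Ys" for a ys
    using that by (intro traj_prob_nonneg[OF K]) simp
  have mass: "(\<Sum>ys\<in>?Ys. ereal (?p a ys) * x) = ereal (\<pi> s a) * x" for a x
  proof -
    have "(\<Sum>ys\<in>?Ys. ereal (?p a ys) * x) = ereal (\<Sum>ys\<in>?Ys. ?p a ys) * x"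
      by (rule sum_distrib_right_ereal_nn[symmetric]) (rule p)
    then show ?thesis
      using sum_traj_prob_Cons[OF K_n] by simp
  qed
  have "exp_cost sig P r \<gamma> \<pi> K (Suc n) s = (\<Sum>a\<in>UNIV. \<Sum>ys\<in>?Ys. ereal (?p a ys) * traj_cost sig P r \<gamma> K ((s, a) # ys))"
    unfolding exp_cost_def by (rule sum_lists_length_Suc_head) (simp add: traj_prob_Cons_other)
  also have "\<dots> = (\<Sum>a\<in>UNIV. (\<Sum>ys\<in>?Ys. ereal (?p a ys) * ?c a) + ereal \<gamma> * (\<Sum>ys\<in>?Ys. ereal (?p a ys) * ?C ys))"
    by (simp add: traj_cost_Cons[OF \<gamma>] ereal_pos_distrib p sum.distrib sum_distrib_left_ereal_nn[OF \<gamma>] mult.left_commute)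
  also have "\<dots> = (\<Sum>a\<in>UNIV. ereal (\<pi> s a) * ?c a + ereal \<gamma> * (ereal (\<pi> s a) * (\<Sum>s'\<in>UNIV. ereal (K 0 s a s') * ?EC s')))"
    by (simp add: mass sum_traj_prob_Cons_mult[OF K_n, of ?C] traj_cost_Nil exp_cost_def)
  also have "\<dots> = (\<Sum>a\<in>UNIV. ereal (\<pi> s a) * (?c a + ereal \<gamma> * (\<Sum>s'\<in>UNIV. ereal (K 0 s a s') * ?EC s')))"
    by (simp add: ereal_pos_distrib policy_nonneg mult.left_commute)
  finally show ?thesis by (simp add: ereal_pos_distrib \<gamma> add.assoc)
qed

end

section \<open>Attainment in the dual representation\<close>

definition dual_representation :: "(('x::finite \<Rightarrow> real) \<Rightarrow> real) \<Rightarrow> bool" where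
  "dual_representation \<sigma> \<longleftrightarrow> (\<forall>V. ereal (\<sigma> V) = (SUP \<mu>\<in>simplex. ereal (- expect \<mu> V) - penalty \<sigma> \<mu>))"

lemma penalty_ge: "ereal (- \<sigma> W - expect \<mu> W) \<le> penalty \<sigma> \<mu>"
  unfolding penalty_def by (rule SUP_upper) simp

lemma penalty_neq_MInfty: "penalty \<sigma> \<mu> \<noteq> -\<infinity>"
  using penalty_ge[of \<sigma> "\<lambda>_. 0" \<mu>] by auto

lemma dual_representation_le:
  assumes "dual_representation \<sigma>" "\<mu> \<in> simplex"
  shows "ereal (- \<sigma> V) \<le> penalty \<sigma> \<mu> + ereal (expect \<mu> V)"
proof -
  have "ereal (- expect \<mu> V) - penalty \<sigma> \<mu> \<le> ereal (\<sigma> V)"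
    using assms unfolding dual_representation_def by (auto intro: SUP_upper)
  then show ?thesis
    using penalty_neq_MInfty[of \<sigma> \<mu>] by (cases "penalty \<sigma> \<mu>") auto
qed

lemma dual_representation_near_optimal:
  assumes "dual_representation \<sigma>" "0 < \<epsilon>"
  shows "\<exists>\<mu>\<in>simplex. \<forall>W. - \<sigma> W - expect \<mu> W + expect \<mu> V \<le> - \<sigma> V + \<epsilon>"
proof -
  have "ereal (\<sigma> V - \<epsilon>) < ereal (\<sigma> V)"
    using assms(2) by simp
  also have "ereal (\<sigma> V) = (SUP \<mu>\<in>simplex. ereal (- expect \<mu> V) - penalty \<sigma> \<mu>)"
    using assms(1) unfolding dual_representation_def by blast
  finally obtain \<mu> where \<mu>: "\<mu> \<in> simplex" and lt: "ereal (\<sigma> V - \<epsilon>) < ereal (- expect \<mu> V) - penalty \<sigma> \<mu>"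
    unfolding less_SUP_iff by blast
  then obtain p where p: "penalty \<sigma> \<mu> = ereal p"
    using penalty_neq_MInfty[of \<sigma> \<mu>] by (cases "penalty \<sigma> \<mu>") auto
  have "- \<sigma> W - expect \<mu> W + expect \<mu> V \<le> - \<sigma> V + \<epsilon>" for W
    using penalty_ge[of \<sigma> W \<mu>] lt p by simp
  then show ?thesis
    using \<mu> by blast
qed

lemma simplex_seq_compact:
  fixes \<mu> :: "nat \<Rightarrow> 'x::finite \<Rightarrow> real"
  assumes "\<And>k. \<mu> k \<in> simplex"
  shows "\<exists>l\<in>simplex. \<exists>\<rho>. strict_mono \<rho> \<and> (\<forall>x. (\<lambda>k. \<mu> (\<rho> k) x) \<longlonglongrightarrow> l x)"
proof -
  define S where "S = {v::real^'x. (\<forall>x. 0 \<le> v $ x) \<and> (\<Sum>x\<in>UNIV. v $ x) = 1}"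
  have "S = cbox 0 1 \<inter> {v. (\<Sum>x\<in>UNIV. v $ x) = 1}"
  proof -
    have "v $ x \<le> 1" if "v \<in> S" for v x
    proof -
      have "v $ x \<le> (\<Sum>x\<in>UNIV. v $ x)"
        using that by (intro member_le_sum) (auto simp: S_def)
      then show ?thesis
        using that by (simp add: S_def)
    qed
    then show ?thesis
      by (auto simp: S_def mem_box_cart)
  qed
  moreover have "closed {v::real^'x. (\<Sum>x\<in>UNIV. v $ x) = 1}"
    by (intro closed_Collect_eq continuous_intros)
  ultimately have "seq_compact S"
    by (simp add: compact_Int_closed compact_imp_seq_compact)
  moreover have "\<forall>k. (\<chi> x. \<mu> k x) \<in> S"
    using assms by (simp add: S_def simplex_def)
  ultimately obtain v \<rho> where v: "v \<in> S" "strict_mono \<rho>" "((\<lambda>k. \<chi> x. \<mu> k x) \<circ> \<rho>) \<longlonglongrightarrow> v"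
    by (rule seq_compactE)
  have "(\<lambda>x. v $ x) \<in> simplex"
    using v(1) by (simp add: S_def simplex_def)
  moreover have "(\<lambda>k. \<mu> (\<rho> k) x) \<longlonglongrightarrow> v $ x" for x
    using tendsto_vec_nth[OF v(3), of x] by (simp add: comp_def)
  ultimately show ?thesis
    using v(2) by blast
qed

lemma dual_representation_attained:
  assumes dual: "dual_representation \<sigma>"
  shows "\<exists>\<mu>\<in>simplex. penalty \<sigma> \<mu> + ereal (expect \<mu> V) = ereal (- \<sigma> V)"
proof -
  have "\<exists>\<mu>\<in>simplex. \<forall>W. - \<sigma> W - expect \<mu> W + expect \<mu> V \<le> - \<sigma> V + inverse (real (Suc k))" for k
    by (rule dual_representation_near_optimal[OF dual]) simp
  then obtain \<mu> where \<mu>: "\<And>k. \<mu> k \<in> simplex"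
    and near: "\<And>k W. - \<sigma> W - expect (\<mu> k) W + expect (\<mu> k) V \<le> - \<sigma> V + inverse (real (Suc k))"
    by metis
  obtain l \<rho> where l: "l \<in> simplex" and \<rho>: "strict_mono \<rho>" and lim: "\<And>x. (\<lambda>k. \<mu> (\<rho> k) x) \<longlonglongrightarrow> l x"
    using simplex_seq_compact[of \<mu>] \<mu> by blast
  have bound: "- \<sigma> W - expect l W + expect l V \<le> - \<sigma> V" for W
  proof (rule LIMSEQ_le)
    show "(\<lambda>k. - \<sigma> W - expect (\<mu> (\<rho> k)) W + expect (\<mu> (\<rho> k)) V) \<longlonglongrightarrow> - \<sigma> W - expect l W + expect l V"
      unfolding expect_def by (intro tendsto_intros lim)
    have vanish: "(\<lambda>k. inverse (real (Suc (\<rho> k)))) \<longlonglongrightarrow> 0"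
      using LIMSEQ_subseq_LIMSEQ[OF LIMSEQ_inverse_real_of_nat \<rho>] by (simp add: comp_def)
    show "(\<lambda>k. - \<sigma> V + inverse (real (Suc (\<rho> k)))) \<longlonglongrightarrow> - \<sigma> V"
      using tendsto_add[OF tendsto_const vanish, of "- \<sigma> V"] by (simp only: add_0_right)
    show "\<exists>N. \<forall>k\<ge>N. - \<sigma> W - expect (\<mu> (\<rho> k)) W + expect (\<mu> (\<rho> k)) V \<le> - \<sigma> V + inverse (real (Suc (\<rho> k)))"
      using near by (intro exI[of _ 0] allI impI)
  qed
  have "penalty \<sigma> l \<le> ereal (- \<sigma> V - expect l V)"
    unfolding penalty_def
  proof (rule SUP_least)
    show "ereal (- \<sigma> W - expect l W) \<le> ereal (- \<sigma> V - expect l V)" for W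
      using bound[of W] by simp
  qed
  then have "penalty \<sigma> l + ereal (expect l V) \<le> ereal (- \<sigma> V)"
    by (cases "penalty \<sigma> l") auto
  then show ?thesis
    using l dual_representation_le[OF dual l, of V] by (intro bexI[of _ l] antisym)
qed

section \<open>Finite-horizon dynamic programming\<close>

lemma argmin_set_simplex: "\<mu> \<in> argmin_set sig P V s a \<Longrightarrow> \<mu> \<in> simplex"
  by (simp add: argmin_set_def)

lemma argmin_set_ereal_iff:
  assumes dual: "dual_representation (sig (P s a))"
  shows "\<mu> \<in> argmin_set sig P (\<lambda>s'. ereal (V s')) s a \<longleftrightarrow>
    \<mu> \<in> simplex \<and> penalty (sig (P s a)) \<mu> + ereal (expect \<mu> V) = ereal (- sig (P s a) V)"
proof -
  obtain \<nu> where \<nu>: "\<nu> \<in> simplex" "penalty (sig (P s a)) \<nu> + ereal (expect \<nu> V) = ereal (- sig (P s a) V)"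
    using dual_representation_attained[OF dual] by blast
  show ?thesis
    unfolding argmin_set_def
    using \<nu> dual_representation_le[OF dual] by (fastforce simp: expect_def intro: antisym)
qed

lemma argmin_set_ereal_nonempty:
  "dual_representation (sig (P s a)) \<Longrightarrow> argmin_set sig P (\<lambda>s'. ereal (V s')) s a \<noteq> {}"
  using dual_representation_attained argmin_set_ereal_iff by blast

lemma Tpi_ereal:
  "ereal (Tpi sig P r \<gamma> \<pi> V s) =
    (\<Sum>a\<in>UNIV. ereal (\<pi> s a) * (ereal (r s a) + ereal \<gamma> * ereal (- sig (P s a) V)))"
  by (simp add: Tpi_def)

locale robust_mdp = stochastic_policy \<pi>
  for \<pi> :: "'s::finite \<Rightarrow> 'a::finite \<Rightarrow> real" +
  fixes P :: "'s \<Rightarrow> 'a \<Rightarrow> 's \<Rightarrow> real"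
    and r :: "'s \<Rightarrow> 'a \<Rightarrow> real"
    and \<gamma> :: real
    and sig :: "('s \<Rightarrow> real) \<Rightarrow> ('s \<Rightarrow> real) \<Rightarrow> real"
  assumes nominal_simplex: "P s a \<in> simplex"
    and discount_nonneg: "0 \<le> \<gamma>"
    and dual: "dual_representation (sig (P s a))"
begin

abbreviation cost :: "(nat \<Rightarrow> 's \<Rightarrow> 'a \<Rightarrow> 's \<Rightarrow> real) \<Rightarrow> nat \<Rightarrow> 's \<Rightarrow> ereal" where
  "cost \<equiv> exp_cost sig P r \<gamma> \<pi>"

text \<open>\<open>opt_value n\<close> is the paper's value over horizon \<open>h = n - 1\<close>, so that the empty
  horizon \<open>h = -1\<close> becomes \<open>n = 0\<close>.\<close>

definition opt_value :: "nat \<Rightarrow> 's \<Rightarrow> ereal" where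
  "opt_value n = Vbar sig P r \<gamma> \<pi> (int n - 1)"

definition greedy :: "nat \<Rightarrow> (nat \<Rightarrow> 's \<Rightarrow> 'a \<Rightarrow> 's \<Rightarrow> real) \<Rightarrow> bool" where
  "greedy n K \<longleftrightarrow> (\<forall>t<n. \<forall>s a. K t s a \<in> argmin_set sig P (opt_value (n - Suc t)) s a)"

lemma opt_value_0: "opt_value 0 s = 0"
  by (simp add: opt_value_def Vbar_def)

lemma opt_value_Suc:
  "opt_value (Suc n) s = (INF K\<in>{K. \<forall>t s a. K t s a \<in> simplex}. cost K (Suc n) s)"
proof -
  have "nat (int n + 1) = Suc n"
    by simp
  then show ?thesis
    by (simp add: opt_value_def Vbar_def)
qed

lemma opt_value_le_cost: "\<forall>t s a. K t s a \<in> simplex \<Longrightarrow> opt_value n s \<le> cost K n s"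
  by (cases n) (auto simp: opt_value_0 exp_cost_0 opt_value_Suc intro!: INF_lower)

lemma greedy_valid_kernels: "greedy n K \<Longrightarrow> valid_kernels n K"
  by (auto simp: greedy_def valid_kernels_def intro: argmin_set_simplex)

lemma greedy_Suc_iff:
  "greedy (Suc n) K \<longleftrightarrow> (\<forall>s a. K 0 s a \<in> argmin_set sig P (opt_value n) s a) \<and> greedy n (shift K)"
  unfolding greedy_def by (auto simp: less_Suc_eq_0_disj)

lemma cost_ge_Tpi:
  assumes V: "opt_value n = (\<lambda>s. ereal (V s))" and K: "\<forall>t s a. K t s a \<in> simplex"
  shows "ereal (Tpi sig P r \<gamma> \<pi> V s) \<le> cost K (Suc n) s"
proof -
  have "ereal (- sig (P s a) V)
      \<le> penalty (sig (P s a)) (K 0 s a) + (\<Sum>s'\<in>UNIV. ereal (K 0 s a s') * cost (shift K) n s')" for a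
  proof -
    have "ereal (- sig (P s a) V) \<le> penalty (sig (P s a)) (K 0 s a) + (\<Sum>s'\<in>UNIV. ereal (K 0 s a s') * ereal (V s'))"
      using dual_representation_le[OF dual] K by (simp add: expect_def)
    also have "\<dots> \<le> penalty (sig (P s a)) (K 0 s a) + (\<Sum>s'\<in>UNIV. ereal (K 0 s a s') * cost (shift K) n s')"
      using opt_value_le_cost[of "shift K" n] V K
      by (intro add_left_mono sum_mono ereal_mult_left_mono) (auto simp: simplex_nonneg)
    finally show ?thesis .
  qed
  then have "ereal (Tpi sig P r \<gamma> \<pi> V s) \<le> (\<Sum>a\<in>UNIV. ereal (\<pi> s a) * (ereal (r s a) + ereal \<gamma> *
      (penalty (sig (P s a)) (K 0 s a) + (\<Sum>s'\<in>UNIV. ereal (K 0 s a s') * cost (shift K) n s'))))"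
    unfolding Tpi_ereal
    by (intro sum_mono ereal_mult_left_mono add_left_mono) (simp_all add: policy_nonneg discount_nonneg)
  also have "\<dots> = cost K (Suc n) s"
    using K by (intro exp_cost_Suc[symmetric] discount_nonneg) (simp add: valid_kernels_def)
  finally show ?thesis .
qed

lemma cost_greedy_Suc:
  assumes V: "opt_value n = (\<lambda>s. ereal (V s))"
    and opt: "\<And>K. greedy n K \<Longrightarrow> cost K n = opt_value n"
    and K: "greedy (Suc n) K"
  shows "cost K (Suc n) s = ereal (Tpi sig P r \<gamma> \<pi> V s)"
proof -
  have K0: "K 0 s a \<in> argmin_set sig P (\<lambda>s'. ereal (V s')) s a" for s a
    using K V by (simp add: greedy_Suc_iff)
  have tail: "cost (shift K) n = (\<lambda>s'. ereal (V s'))"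
    using K V opt by (simp add: greedy_Suc_iff)
  show ?thesis
    using K0
    unfolding exp_cost_Suc[OF discount_nonneg greedy_valid_kernels[OF K]] tail Tpi_ereal
    by (simp add: argmin_set_ereal_iff[where sig = sig and P = P, OF dual] expect_def)
qed

lemma greedy_Suc_exists:
  assumes V: "opt_value n = (\<lambda>s. ereal (V s))"
    and K: "\<forall>t s a. K t s a \<in> simplex" "greedy n K"
  shows "\<exists>K'. (\<forall>t s a. K' t s a \<in> simplex) \<and> greedy (Suc n) K'"
proof -
  define \<mu> where "\<mu> s a = (SOME \<mu>. \<mu> \<in> argmin_set sig P (opt_value n) s a)" for s a
  have \<mu>: "\<mu> s a \<in> argmin_set sig P (opt_value n) s a" for s a
    unfolding \<mu>_def V using argmin_set_ereal_nonempty[where sig = sig and P = P, OF dual] by (simp add: some_in_eq)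
  define K' where "K' t = (case t of 0 \<Rightarrow> \<mu> | Suc t \<Rightarrow> K t)" for t
  have "shift K' = K"
    by (simp add: K'_def fun_eq_iff)
  then have "greedy (Suc n) K'"
    using \<mu> K(2) by (simp add: greedy_Suc_iff K'_def)
  moreover have "\<forall>t s a. K' t s a \<in> simplex"
    using K(1) argmin_set_simplex[OF \<mu>] by (simp add: K'_def split: nat.split)
  ultimately show ?thesis
    by blast
qed

lemma opt_value_Suc_eq_Tpi:
  assumes V: "opt_value n = (\<lambda>s. ereal (V s))"
    and opt: "\<And>K. greedy n K \<Longrightarrow> cost K n = opt_value n"
    and ex: "\<exists>K. (\<forall>t s a. K t s a \<in> simplex) \<and> greedy n K"
  shows "opt_value (Suc n) s = ereal (Tpi sig P r \<gamma> \<pi> V s)"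
proof (rule antisym)
  obtain K where "\<forall>t s a. K t s a \<in> simplex" "greedy (Suc n) K"
    using greedy_Suc_exists[OF V] ex by blast
  then show "opt_value (Suc n) s \<le> ereal (Tpi sig P r \<gamma> \<pi> V s)"
    using opt_value_le_cost cost_greedy_Suc[OF V opt] by metis
next
  show "ereal (Tpi sig P r \<gamma> \<pi> V s) \<le> opt_value (Suc n) s"
    unfolding opt_value_Suc by (rule INF_greatest) (simp add: cost_ge_Tpi[OF V])
qed

lemma opt_value_finite_greedy_optimal:
  "(\<exists>V. opt_value n = (\<lambda>s. ereal (V s))) \<and>
   (\<forall>K. greedy n K \<longrightarrow> cost K n = opt_value n) \<and>
   (\<exists>K. (\<forall>t s a. K t s a \<in> simplex) \<and> greedy n K)"
proof (induction n)
  case 0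
  have "opt_value 0 = (\<lambda>s. ereal 0)" "\<And>K. cost K 0 = opt_value 0" "greedy 0 (\<lambda>t. P)"
    by (simp_all add: fun_eq_iff opt_value_0 exp_cost_0 greedy_def)
  then show ?case
    using nominal_simplex by (intro conjI exI[of _ "\<lambda>_. 0"] exI[of _ "\<lambda>_. P"]) auto
next
  case (Suc n)
  then obtain V where V: "opt_value n = (\<lambda>s. ereal (V s))"
    and opt: "\<And>K. greedy n K \<Longrightarrow> cost K n = opt_value n"
    and ex: "\<exists>K. (\<forall>t s a. K t s a \<in> simplex) \<and> greedy n K"
    by blast
  have V': "opt_value (Suc n) = (\<lambda>s. ereal (Tpi sig P r \<gamma> \<pi> V s))"
    using opt_value_Suc_eq_Tpi[OF V opt ex] by blast
  moreover have "cost K (Suc n) = opt_value (Suc n)" if "greedy (Suc n) K" for K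
    using cost_greedy_Suc[OF V opt that] V' by auto
  moreover have "\<exists>K. (\<forall>t s a. K t s a \<in> simplex) \<and> greedy (Suc n) K"
    using greedy_Suc_exists[OF V] ex by blast
  ultimately show ?case
    by blast
qed

lemma Vbar_eq_opt_value: "-1 \<le> h \<Longrightarrow> Vbar sig P r \<gamma> \<pi> h = opt_value (nat (h + 1))"
  by (simp add: opt_value_def)

lemma Vbar_Bellman:
  assumes "-1 \<le> h"
  shows "\<exists>V. (\<forall>s. Vbar sig P r \<gamma> \<pi> h s = ereal (V s)) \<and>
             (\<forall>s. Vbar sig P r \<gamma> \<pi> (h + 1) s = ereal (Tpi sig P r \<gamma> \<pi> V s))"
proof -
  let ?n = "nat (h + 1)"
  obtain V where V: "opt_value ?n = (\<lambda>s. ereal (V s))"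
    and opt: "\<And>K. greedy ?n K \<Longrightarrow> cost K ?n = opt_value ?n"
    and ex: "\<exists>K. (\<forall>t s a. K t s a \<in> simplex) \<and> greedy ?n K"
    using opt_value_finite_greedy_optimal by blast
  have "nat (h + 1 + 1) = Suc ?n"
    using assms by arith
  then have "Vbar sig P r \<gamma> \<pi> (h + 1) = opt_value (Suc ?n)"
    using assms Vbar_eq_opt_value[of "h + 1"] by simp
  then show ?thesis
    using opt_value_Suc_eq_Tpi[OF V opt ex] Vbar_eq_opt_value[OF assms] V by auto
qed

lemma Vbar_argmin_set_nonempty:
  assumes "-1 \<le> h"
  shows "argmin_set sig P (Vbar sig P r \<gamma> \<pi> h) s a \<noteq> {}"
proof -
  obtain V where "opt_value (nat (h + 1)) = (\<lambda>s. ereal (V s))"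
    using opt_value_finite_greedy_optimal by blast
  then show ?thesis
    using Vbar_eq_opt_value[OF assms] argmin_set_ereal_nonempty[where sig = sig and P = P, OF dual] by simp
qed

lemma Vbar_greedy_optimal:
  assumes h: "0 \<le> h"
    and K: "\<forall>t. int t \<le> h \<longrightarrow> (\<forall>s a. K t s a \<in> argmin_set sig P (Vbar sig P r \<gamma> \<pi> (h - int t - 1)) s a)"
  shows "cost K (nat (h + 1)) s = Vbar sig P r \<gamma> \<pi> h s"
proof -
  have "Vbar sig P r \<gamma> \<pi> (h - int t - 1) = opt_value (nat (h + 1) - Suc t)" if "int t \<le> h" for t
  proof -
    have "nat (h - int t - 1 + 1) = nat (h + 1) - Suc t"
      using that by arith
    then show ?thesis
      using that Vbar_eq_opt_value[of "h - int t - 1"] by simp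
  qed
  then have "greedy (nat (h + 1)) K"
    using K h by (simp add: greedy_def)
  then show ?thesis
    using opt_value_finite_greedy_optimal Vbar_eq_opt_value h by simp
qed

end

theorem mainTheorem4:
  fixes P :: "'s::finite \<Rightarrow> 'a::finite \<Rightarrow> 's \<Rightarrow> real"
    and r :: "'s \<Rightarrow> 'a \<Rightarrow> real"
    and \<gamma> :: real
    and \<pi> :: "'s \<Rightarrow> 'a \<Rightarrow> real"
    and sig :: "('s \<Rightarrow> real) \<Rightarrow> ('s \<Rightarrow> real) \<Rightarrow> real"
  assumes P: "\<forall>s a. P s a \<in> simplex"
    and r: "\<forall>s a. 0 \<le> r s a \<and> r s a \<le> 1"
    and \<gamma>: "0 \<le> \<gamma>" "\<gamma> < 1"
    and \<pi>: "\<forall>s. \<pi> s \<in> simplex"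
    and crm: "\<forall>s a. convex_risk_measure (sig (P s a))"
    and dual: "\<forall>s a V. ereal (sig (P s a) V) =
                 (SUP \<mu>\<in>simplex. ereal (- expect \<mu> V) - penalty (sig (P s a)) \<mu>)"
  shows "(\<forall>h::int. h \<ge> -1 \<longrightarrow>
            (\<exists>V. (\<forall>s. Vbar sig P r \<gamma> \<pi> h s = ereal (V s)) \<and>
                 (\<forall>s. Vbar sig P r \<gamma> \<pi> (h + 1) s = ereal (Tpi sig P r \<gamma> \<pi> V s))))
       \<and> (\<forall>h::int. h \<ge> 0 \<longrightarrow>
            (\<forall>t::nat. int t \<le> h \<longrightarrow>
               (\<forall>s a. argmin_set sig P (Vbar sig P r \<gamma> \<pi> (h - int t - 1)) s a \<noteq> {})) \<and>
            (\<forall>K. (\<forall>t::nat. int t \<le> h \<longrightarrow>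
                    (\<forall>s a. K t s a \<in> argmin_set sig P (Vbar sig P r \<gamma> \<pi> (h - int t - 1)) s a))
                 \<longrightarrow> (\<forall>s. exp_cost sig P r \<gamma> \<pi> K (nat (h + 1)) s = Vbar sig P r \<gamma> \<pi> h s)))"
proof -
  \<comment> \<open>Only the dual representation and \<open>0 \<le> \<gamma>\<close> are needed: for finite horizons neither
    convexity of \<open>sig\<close>, nor the bounds on \<open>r\<close>, nor \<open>\<gamma> < 1\<close> play a role.\<close>
  interpret robust_mdp \<pi> P r \<gamma> sig
    using P \<gamma>(1) \<pi> dual by unfold_locales (auto simp: dual_representation_def)
  show ?thesis
    using Vbar_Bellman Vbar_argmin_set_nonempty Vbar_greedy_optimal by auto
qed

end
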